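(* Let $P,Q,\widetilde P,\widetilde Q\in\mathbb{R}^{3\times3}$ be symmetric matrices with entries $p_{ij},q_{ij},\widetilde p_{ij},\widetilde q_{ij}$. Let $\Omega=\{(x_i,y_i)\}_{i=1}^N\subset\mathbb{R}^2$ with $\operatorname{rank}V_\Omega=15$, write $\bar x=(x,y,1)^T$, and suppose that $$\frac{\bar x^TP\bar x}{\bar x^TQ\bar x}=\frac{\bar x^T\widetilde P\bar x}{\bar x^T\widetilde Q\bar x}\quad\text{for all }(x,y)\in\Omega$$ (with the denominators nonzero). Suppose moreover that one of the following holds. Case 1: $q_{11}\ne0$, $q_{22}\ne0$, $q_{33}\ne0$, and $4(p_{11}q_{12}-p_{12}q_{11})(p_{22}q_{12}-p_{12}q_{22})+(p_{11}q_{22}-p_{22}q_{11})^2\ne0$, $4(p_{11}q_{13}-p_{13}q_{11})(p_{33}q_{13}-p_{13}q_{33})+(p_{11}q_{33}-p_{33}q_{11})^2\ne0$, $4(p_{22}q_{23}-p_{23}q_{22})(p_{33}q_{23}-p_{23}q_{33})+(p_{22}q_{33}-p_{33}q_{22})^2\ne0$. Case 2: $p_{j2}=p_{2j}=q_{j2}=q_{2j}=\widetilde p_{j2}=\widetilde p_{2j}=\widetilde q_{j2}=\widetilde q_{2j}=0$ for all $j\in\{1,2,3\}$, $q_{11}\ne0$, $q_{33}\ne0$, and $4(p_{11}q_{13}-p_{13}q_{11})(p_{33}q_{13}-p_{13}q_{33})+(p_{11}q_{33}-p_{33}q_{11})^2\ne0$. Then there is a constant scalar $t\ne0$ with $P=t\widetilde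 P$ and $Q=t\widetilde Q$.
   Context: For a finite set of locations $\Omega=\{(x_i,y_i)\}_{i=1}^N$, $V_\Omega\in\mathbb{R}^{N\times15}$ denotes the matrix whose $i$-th row consists of all 15 monomials $x_i^py_i^q$ with $p,q\ge0$, $p+q\le4$. *)

theory Defs
  imports "HOL-Analysis.Analysis"
begin

text \<open>Exponent pairs (p,q) with p + q \<le> 4: the 15 bivariate monomials of degree at most 4.\<close>
typedef mono_exp = "{pq::nat\<times>nat. fst pq + snd pq \<le> 4}"
  by (rule exI[of _ "(0,0)"]) simp

instance mono_exp :: finite
proof
  have "finite {pq::nat\<times>nat. fst pq + snd pq \<le> 4}"
    by (rule finite_subset[of _ "{..4} \<times> {..4}"]) auto
  then show "finite (UNIV :: mono_exp set)"
    using finite_imageI[of _ Abs_mono_exp] type_definition.Abs_image[OF type_definition_mono_exp]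
    by metis
qed

definition V_Omega :: "('n::finite \<Rightarrow> real \<times> real) \<Rightarrow> real^mono_exp^'n" where
  "V_Omega pts = (\<chi> i e. fst (pts i) ^ fst (Rep_mono_exp e) * snd (pts i) ^ snd (Rep_mono_exp e))"

definition xbar :: "real \<Rightarrow> real \<Rightarrow> real^3" where
  "xbar x y = vector [x, y, 1]"

definition qform :: "real^3^3 \<Rightarrow> real^3 \<Rightarrow> real" where
  "qform A v = v \<bullet> (A *v v)"

end

theory Submission
  imports Defs
begin

text \<open>Clearing denominators, \<open>(x\<^sup>TPx)(x\<^sup>TQ'x) - (x\<^sup>TP'x)(x\<^sup>TQx)\<close> is a polynomial of degree at most 4
  in \<open>(x,y)\<close> vanishing on \<open>\<Omega>\<close>, so its 15 coefficients vanish because \<open>V\<^sub>\<Omega>\<close> has full column rank.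
  Its restriction to \<open>y = 0\<close>, its top-degree part and its restriction to \<open>x = 0\<close> are identities
  \<open>a f = c b\<close> between binary quadratic forms coming from the principal \<open>2\<times>2\<close> blocks \<open>{1,3}\<close>,
  \<open>{1,2}\<close>, \<open>{2,3}\<close> of \<open>P, Q, P', Q'\<close>. A nonzero resultant makes \<open>a\<close> and \<open>b\<close> coprime, so \<open>a\<close> divides
  \<open>c\<close> and each block of \<open>(P',Q')\<close> is a multiple of the same block of \<open>(P,Q)\<close>; the blocks share
  nonzero diagonal entries of \<open>Q\<close>, so the multiples agree.\<close>

definition quartic_exps :: "(nat \<times> nat) set" where
  "quartic_exps = {pq. fst pq + snd pq \<le> 4}"

lemma quartic_exps_eq:
  "quartic_exps = {(0,0),(0,1),(0,2),(0,3),(0,4),(1,0),(1,1),(1,2),(1,3),(2,0),(2,1),(2,2),(3,0),(3,1),(4,0)}"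
    (is "_ = ?E")
proof
  show "quartic_exps \<subseteq> ?E"
  proof
    fix pq :: "nat \<times> nat"
    assume "pq \<in> quartic_exps"
    then obtain a b where pq: "pq = (a, b)" and "a + b \<le> 4"
      by (cases pq) (simp add: quartic_exps_def)
    then have "a = 0 \<or> a = 1 \<or> a = 2 \<or> a = 3 \<or> a = 4" "b = 0 \<or> b = 1 \<or> b = 2 \<or> b = 3 \<or> b = 4"
      by arith+
    with \<open>a + b \<le> 4\<close> show "pq \<in> ?E" unfolding pq by (elim disjE) simp_all
  qed
  show "?E \<subseteq> quartic_exps" by (simp add: quartic_exps_def)
qed

lemma range_Rep_mono_exp: "range Rep_mono_exp = quartic_exps"
  unfolding quartic_exps_def using type_definition.Rep_range[OF type_definition_mono_exp] .

lemma CARD_mono_exp: "CARD(mono_exp) = 15"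
proof -
  have "CARD(mono_exp) = card (range Rep_mono_exp)"
    by (simp add: card_image inj_on_def Rep_mono_exp_inject)
  then show ?thesis by (simp add: range_Rep_mono_exp quartic_exps_eq)
qed

lemma sum_mono_exp: "(\<Sum>e\<in>UNIV. g (Rep_mono_exp e)) = (\<Sum>pq\<in>quartic_exps. g pq)"
proof -
  have "(\<Sum>pq\<in>range Rep_mono_exp. g pq) = (\<Sum>e\<in>UNIV. g (Rep_mono_exp e))"
    by (simp add: sum.reindex inj_on_def Rep_mono_exp_inject)
  then show ?thesis by (simp add: range_Rep_mono_exp)
qed

lemma quartic_coeffs_eq_0_if_vanishes:
  fixes pts :: "'n::finite \<Rightarrow> real \<times> real"
  assumes rank: "rank (V_Omega pts) = 15"
    and vanish: "\<forall>i. (\<Sum>pq\<in>quartic_exps. c pq * fst (pts i) ^ fst pq * snd (pts i) ^ snd pq) = 0"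
    and pq: "pq \<in> quartic_exps"
  shows "c pq = 0"
proof -
  define v :: "real^mono_exp" where "v = (\<chi> e. c (Rep_mono_exp e))"
  have "(V_Omega pts *v v) $ i = 0" for i
    using vanish sum_mono_exp[of "\<lambda>pq. c pq * fst (pts i) ^ fst pq * snd (pts i) ^ snd pq"]
    by (simp add: matrix_vector_mult_def V_Omega_def v_def mult_ac)
  then have "V_Omega pts *v v = 0"
    by (simp add: vec_eq_iff)
  moreover have "inj ((*v) (V_Omega pts))"
    using full_rank_injective[of "V_Omega pts"] rank CARD_mono_exp by simp
  ultimately have "v = 0"
    by (metis injD matrix_vector_mult_0_right)
  moreover obtain e where "pq = Rep_mono_exp e"
    using pq range_Rep_mono_exp by blast
  ultimately show ?thesis by (simp add: v_def vec_eq_iff)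
qed

text \<open>A polynomial in \<open>x, y\<close> is encoded by its coefficient function: \<open>c (p,q)\<close> is the coefficient
  of \<open>x\<^sup>py\<^sup>q\<close>.\<close>

definition conic_coeff :: "real^3^3 \<Rightarrow> nat \<times> nat \<Rightarrow> real" where
  "conic_coeff A pq =
    (if pq = (2,0) then A$1$1 else if pq = (1,1) then A$1$2 + A$2$1 else if pq = (0,2) then A$2$2
     else if pq = (1,0) then A$1$3 + A$3$1 else if pq = (0,1) then A$2$3 + A$3$2 else A$3$3)"

definition conic_poly :: "(nat \<times> nat \<Rightarrow> real) \<Rightarrow> real \<Rightarrow> real \<Rightarrow> real" where
  "conic_poly a x y = a (2,0)*x*x + a (1,1)*x*y + a (0,2)*y*y + a (1,0)*x + a (0,1)*y + a (0,0)"

lemma qform_xbar: "qform A (xbar x y) = conic_poly (conic_coeff A) x y"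
  unfolding qform_def xbar_def conic_poly_def conic_coeff_def
  by (simp add: inner_vec_def matrix_vector_mult_def sum_3 algebra_simps)

definition conic_product_coeff :: "(nat \<times> nat \<Rightarrow> real) \<Rightarrow> (nat \<times> nat \<Rightarrow> real) \<Rightarrow> nat \<times> nat \<Rightarrow> real" where
  "conic_product_coeff a b pq =
    (if pq = (0,0) then a (0,0) * b (0,0)
     else if pq = (0,1) then a (0,1) * b (0,0) + a (0,0) * b (0,1)
     else if pq = (0,2) then a (0,2) * b (0,0) + a (0,1) * b (0,1) + a (0,0) * b (0,2)
     else if pq = (0,3) then a (0,2) * b (0,1) + a (0,1) * b (0,2)
     else if pq = (0,4) then a (0,2) * b (0,2)
     else if pq = (1,0) then a (1,0) * b (0,0) + a (0,0) * b (1,0)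
     else if pq = (1,1) then a (1,1) * b (0,0) + a (1,0) * b (0,1) + a (0,1) * b (1,0) + a (0,0) * b (1,1)
     else if pq = (1,2) then a (1,1) * b (0,1) + a (0,2) * b (1,0) + a (1,0) * b (0,2) + a (0,1) * b (1,1)
     else if pq = (1,3) then a (1,1) * b (0,2) + a (0,2) * b (1,1)
     else if pq = (2,0) then a (2,0) * b (0,0) + a (1,0) * b (1,0) + a (0,0) * b (2,0)
     else if pq = (2,1) then a (2,0) * b (0,1) + a (1,1) * b (1,0) + a (1,0) * b (1,1) + a (0,1) * b (2,0)
     else if pq = (2,2) then a (2,0) * b (0,2) + a (1,1) * b (1,1) + a (0,2) * b (2,0)
     else if pq = (3,0) then a (2,0) * b (1,0) + a (1,0) * b (2,0)
     else if pq = (3,1) then a (2,0) * b (1,1) + a (1,1) * b (2,0)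
     else if pq = (4,0) then a (2,0) * b (2,0)
     else 0)"

lemma conic_poly_mult:
  "conic_poly a x y * conic_poly b x y
     = (\<Sum>pq\<in>quartic_exps. conic_product_coeff a b pq * x ^ fst pq * y ^ snd pq)"
  unfolding quartic_exps_eq conic_poly_def
  by (simp add: conic_product_coeff_def power2_eq_square power3_eq_cube power4_eq_xxxx) algebra

definition cross_coeff :: "real^3^3 \<Rightarrow> real^3^3 \<Rightarrow> real^3^3 \<Rightarrow> real^3^3 \<Rightarrow> nat \<times> nat \<Rightarrow> real" where
  "cross_coeff P Q P' Q' pq =
    conic_product_coeff (conic_coeff P) (conic_coeff Q') pq - conic_product_coeff (conic_coeff P') (conic_coeff Q) pq"

lemma qform_cross_eq_sum:
  "qform P (xbar x y) * qform Q' (xbar x y) - qform P' (xbar x y) * qform Q (xbar x y)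
     = (\<Sum>pq\<in>quartic_exps. cross_coeff P Q P' Q' pq * x ^ fst pq * y ^ snd pq)"
  by (simp add: qform_xbar conic_poly_mult cross_coeff_def left_diff_distrib sum_subtractf)

lemma cross_coeff_eq_0:
  fixes pts :: "'n::finite \<Rightarrow> real \<times> real"
  assumes rank: "rank (V_Omega pts) = 15"
    and denQ: "\<forall>i. qform Q (xbar (fst (pts i)) (snd (pts i))) \<noteq> 0"
    and denQ': "\<forall>i. qform Q' (xbar (fst (pts i)) (snd (pts i))) \<noteq> 0"
    and eq: "\<forall>i. qform P (xbar (fst (pts i)) (snd (pts i))) / qform Q (xbar (fst (pts i)) (snd (pts i)))
                = qform P' (xbar (fst (pts i)) (snd (pts i))) / qform Q' (xbar (fst (pts i)) (snd (pts i)))"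
  shows "\<forall>pq\<in>quartic_exps. cross_coeff P Q P' Q' pq = 0"
proof
  fix pq assume "pq \<in> quartic_exps"
  moreover have "\<forall>i. qform P (xbar (fst (pts i)) (snd (pts i))) * qform Q' (xbar (fst (pts i)) (snd (pts i)))
      - qform P' (xbar (fst (pts i)) (snd (pts i))) * qform Q (xbar (fst (pts i)) (snd (pts i))) = 0"
    using denQ denQ' eq by (simp add: field_simps)
  ultimately show "cross_coeff P Q P' Q' pq = 0"
    using quartic_coeffs_eq_0_if_vanishes[OF rank] by (simp add: qform_cross_eq_sum)
qed

text \<open>The resultant of the binary forms \<open>a\<^sub>0u\<^sup>2 + 2a\<^sub>1uv + a\<^sub>2v\<^sup>2\<close> and \<open>b\<^sub>0u\<^sup>2 + 2b\<^sub>1uv + b\<^sub>2v\<^sup>2\<close>.\<close>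

definition quadratic_form_resultant :: "real \<Rightarrow> real \<Rightarrow> real \<Rightarrow> real \<Rightarrow> real \<Rightarrow> real \<Rightarrow> real" where
  "quadratic_form_resultant a0 a1 a2 b0 b1 b2 = 4*(a0*b1 - a1*b0)*(a2*b1 - a1*b2) + (a0*b2 - a2*b0)^2"

text \<open>\<open>E0\<close>--\<open>E4\<close> compare the coefficients of \<open>u\<^sup>4, u\<^sup>3v, \<dots>, v\<^sup>4\<close> in \<open>a f = c b\<close> for binary forms
  written as above. The four eliminations in the proof are the algebraic form of: \<open>a\<close> and \<open>b\<close> are
  coprime, so \<open>a\<close> divides \<open>c\<close>.\<close>

lemma quadratic_forms_proportional:
  fixes a0 a1 a2 b0 b1 b2 c0 c1 c2 f0 f1 f2 :: real
  assumes b0: "b0 \<noteq> 0" and R: "quadratic_form_resultant a0 a1 a2 b0 b1 b2 \<noteq> 0"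
    and E0: "a0*f0 = c0*b0"
    and E1: "a0*f1 + a1*f0 = c0*b1 + c1*b0"
    and E2: "a0*f2 + 4*a1*f1 + a2*f0 = c0*b2 + 4*c1*b1 + c2*b0"
    and E3: "a1*f2 + a2*f1 = c1*b2 + c2*b1"
    and E4: "a2*f2 = c2*b2"
  shows "\<exists>t. c0 = t*a0 \<and> c1 = t*a1 \<and> c2 = t*a2 \<and> f0 = t*b0 \<and> f1 = t*b1 \<and> f2 = t*b2"
proof -
  define t where "t = f0/b0"
  have f0: "f0 = t*b0" using b0 by (simp add: t_def)
  have c0: "c0 = t*a0" using E0 b0 unfolding f0 by (metis mult.assoc mult.commute mult_right_cancel)
  let ?R = "quadratic_form_resultant a0 a1 a2 b0 b1 b2"
  have "?R * b0 * (c1 - t*a1) = 0" "?R * b0 * (c2 - t*a2) = 0"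
    "?R * b0 * (f1 - t*b1) = 0" "?R * b0 * (f2 - t*b2) = 0"
    using E1 E2 E3 E4 unfolding f0 c0 quadratic_form_resultant_def by algebra+
  then show ?thesis using R b0 f0 c0 by (intro exI[of _ t]) auto
qed

lemma symmetric_entry: "transpose A = A \<Longrightarrow> A$j$i = A$i$j"
  by (metis transpose_def vec_lambda_beta)

definition block_proportional :: "real \<Rightarrow> real^3^3 \<Rightarrow> real^3^3 \<Rightarrow> real^3^3 \<Rightarrow> real^3^3 \<Rightarrow> 3 \<Rightarrow> 3 \<Rightarrow> bool" where
  "block_proportional t P Q P' Q' i j \<longleftrightarrow>
    P'$i$i = t*P$i$i \<and> P'$i$j = t*P$i$j \<and> P'$j$j = t*P$j$j \<and>
    Q'$i$i = t*Q$i$i \<and> Q'$i$j = t*Q$i$j \<and> Q'$j$j = t*Q$j$j"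

lemma block_13_proportional:
  assumes sym: "transpose P = P" "transpose Q = Q" "transpose P' = P'" "transpose Q' = Q'"
    and cross: "\<forall>pq\<in>quartic_exps. cross_coeff P Q P' Q' pq = 0"
    and Q11: "Q$1$1 \<noteq> 0"
    and R: "quadratic_form_resultant (P$1$1) (P$1$3) (P$3$3) (Q$1$1) (Q$1$3) (Q$3$3) \<noteq> 0"
  shows "\<exists>t. block_proportional t P Q P' Q' 1 3"
proof -
  have "cross_coeff P Q P' Q' (k,0) = 0" if "k \<le> 4" for k
    using cross that by (simp add: quartic_exps_def)
  note c = this[of 4] this[of 3] this[of 2] this[of 1] this[of 0]
  note unf = cross_coeff_def conic_product_coeff_def conic_coeff_def
    symmetric_entry[OF sym(1)] symmetric_entry[OF sym(2)] symmetric_entry[OF sym(3)] symmetric_entry[OF sym(4)]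
  have "P$1$1*Q'$1$1 = P'$1$1*Q$1$1" using c by (simp add: unf)
  moreover have "P$1$1*Q'$1$3 + P$1$3*Q'$1$1 = P'$1$1*Q$1$3 + P'$1$3*Q$1$1"
    using c by (simp add: unf; algebra)
  moreover have "P$1$1*Q'$3$3 + 4*P$1$3*Q'$1$3 + P$3$3*Q'$1$1 = P'$1$1*Q$3$3 + 4*P'$1$3*Q$1$3 + P'$3$3*Q$1$1"
    using c by (simp add: unf; algebra)
  moreover have "P$1$3*Q'$3$3 + P$3$3*Q'$1$3 = P'$1$3*Q$3$3 + P'$3$3*Q$1$3"
    using c by (simp add: unf; algebra)
  moreover have "P$3$3*Q'$3$3 = P'$3$3*Q$3$3" using c by (simp add: unf)
  ultimately show ?thesis
    using quadratic_forms_proportional[OF Q11 R] unfolding block_proportional_def by blast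
qed

lemma block_12_proportional:
  assumes sym: "transpose P = P" "transpose Q = Q" "transpose P' = P'" "transpose Q' = Q'"
    and cross: "\<forall>pq\<in>quartic_exps. cross_coeff P Q P' Q' pq = 0"
    and Q11: "Q$1$1 \<noteq> 0"
    and R: "quadratic_form_resultant (P$1$1) (P$1$2) (P$2$2) (Q$1$1) (Q$1$2) (Q$2$2) \<noteq> 0"
  shows "\<exists>t. block_proportional t P Q P' Q' 1 2"
proof -
  have "cross_coeff P Q P' Q' (k, 4 - k) = 0" if "k \<le> 4" for k
    using cross that by (simp add: quartic_exps_def)
  note c = this[of 4] this[of 3] this[of 2] this[of 1] this[of 0]
  note unf = cross_coeff_def conic_product_coeff_def conic_coeff_def
    symmetric_entry[OF sym(1)] symmetric_entry[OF sym(2)] symmetric_entry[OF sym(3)] symmetric_entry[OF sym(4)]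
  have "P$1$1*Q'$1$1 = P'$1$1*Q$1$1" using c by (simp add: unf)
  moreover have "P$1$1*Q'$1$2 + P$1$2*Q'$1$1 = P'$1$1*Q$1$2 + P'$1$2*Q$1$1"
    using c by (simp add: unf; algebra)
  moreover have "P$1$1*Q'$2$2 + 4*P$1$2*Q'$1$2 + P$2$2*Q'$1$1 = P'$1$1*Q$2$2 + 4*P'$1$2*Q$1$2 + P'$2$2*Q$1$1"
    using c by (simp add: unf; algebra)
  moreover have "P$1$2*Q'$2$2 + P$2$2*Q'$1$2 = P'$1$2*Q$2$2 + P'$2$2*Q$1$2"
    using c by (simp add: unf; algebra)
  moreover have "P$2$2*Q'$2$2 = P'$2$2*Q$2$2" using c by (simp add: unf)
  ultimately show ?thesis
    using quadratic_forms_proportional[OF Q11 R] unfolding block_proportional_def by blast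
qed

lemma block_23_proportional:
  assumes sym: "transpose P = P" "transpose Q = Q" "transpose P' = P'" "transpose Q' = Q'"
    and cross: "\<forall>pq\<in>quartic_exps. cross_coeff P Q P' Q' pq = 0"
    and Q22: "Q$2$2 \<noteq> 0"
    and R: "quadratic_form_resultant (P$2$2) (P$2$3) (P$3$3) (Q$2$2) (Q$2$3) (Q$3$3) \<noteq> 0"
  shows "\<exists>t. block_proportional t P Q P' Q' 2 3"
proof -
  have "cross_coeff P Q P' Q' (0, k) = 0" if "k \<le> 4" for k
    using cross that by (simp add: quartic_exps_def)
  note c = this[of 4] this[of 3] this[of 2] this[of 1] this[of 0]
  note unf = cross_coeff_def conic_product_coeff_def conic_coeff_def
    symmetric_entry[OF sym(1)] symmetric_entry[OF sym(2)] symmetric_entry[OF sym(3)] symmetric_entry[OF sym(4)]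
  have "P$2$2*Q'$2$2 = P'$2$2*Q$2$2" using c by (simp add: unf)
  moreover have "P$2$2*Q'$2$3 + P$2$3*Q'$2$2 = P'$2$2*Q$2$3 + P'$2$3*Q$2$2"
    using c by (simp add: unf; algebra)
  moreover have "P$2$2*Q'$3$3 + 4*P$2$3*Q'$2$3 + P$3$3*Q'$2$2 = P'$2$2*Q$3$3 + 4*P'$2$3*Q$2$3 + P'$3$3*Q$2$2"
    using c by (simp add: unf; algebra)
  moreover have "P$2$3*Q'$3$3 + P$3$3*Q'$2$3 = P'$2$3*Q$3$3 + P'$3$3*Q$2$3"
    using c by (simp add: unf; algebra)
  moreover have "P$3$3*Q'$3$3 = P'$3$3*Q$3$3" using c by (simp add: unf)
  ultimately show ?thesis
    using quadratic_forms_proportional[OF Q22 R] unfolding block_proportional_def by blast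
qed

lemma symmetric_matrix_eq_scaleR:
  fixes A B :: "real^3^3"
  assumes "transpose A = A" "transpose B = B"
    and "B$1$1 = t*A$1$1" "B$1$2 = t*A$1$2" "B$1$3 = t*A$1$3"
    and "B$2$2 = t*A$2$2" "B$2$3 = t*A$2$3" "B$3$3 = t*A$3$3"
  shows "B = t *\<^sub>R A"
  using assms symmetric_entry[OF assms(1)] symmetric_entry[OF assms(2)]
  by (simp add: vec_eq_iff forall_3)

lemma proportional_if_three_blocks:
  assumes sym: "transpose P = P" "transpose Q = Q" "transpose P' = P'" "transpose Q' = Q'"
    and cross: "\<forall>pq\<in>quartic_exps. cross_coeff P Q P' Q' pq = 0"
    and Q11: "Q$1$1 \<noteq> 0" and Q22: "Q$2$2 \<noteq> 0"
    and R12: "quadratic_form_resultant (P$1$1) (P$1$2) (P$2$2) (Q$1$1) (Q$1$2) (Q$2$2) \<noteq> 0"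
    and R13: "quadratic_form_resultant (P$1$1) (P$1$3) (P$3$3) (Q$1$1) (Q$1$3) (Q$3$3) \<noteq> 0"
    and R23: "quadratic_form_resultant (P$2$2) (P$2$3) (P$3$3) (Q$2$2) (Q$2$3) (Q$3$3) \<noteq> 0"
  shows "\<exists>t. P' = t *\<^sub>R P \<and> Q' = t *\<^sub>R Q"
proof -
  obtain t where t: "block_proportional t P Q P' Q' 1 2"
    using block_12_proportional[OF sym cross Q11 R12] ..
  obtain t2 where t2: "block_proportional t2 P Q P' Q' 1 3"
    using block_13_proportional[OF sym cross Q11 R13] ..
  obtain t3 where t3: "block_proportional t3 P Q P' Q' 2 3"
    using block_23_proportional[OF sym cross Q22 R23] ..
  have "t2 = t" "t3 = t"
    using t t2 t3 Q11 Q22 by (auto simp: block_proportional_def)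
  with t t2 t3 show ?thesis
    using symmetric_matrix_eq_scaleR[OF sym(1,3)] symmetric_matrix_eq_scaleR[OF sym(2,4)]
    by (auto simp: block_proportional_def)
qed

lemma proportional_if_outer_block:
  assumes sym: "transpose P = P" "transpose Q = Q" "transpose P' = P'" "transpose Q' = Q'"
    and cross: "\<forall>pq\<in>quartic_exps. cross_coeff P Q P' Q' pq = 0"
    and row2: "\<forall>j. P$2$j = 0 \<and> Q$2$j = 0 \<and> P'$2$j = 0 \<and> Q'$2$j = 0"
    and Q11: "Q$1$1 \<noteq> 0"
    and R13: "quadratic_form_resultant (P$1$1) (P$1$3) (P$3$3) (Q$1$1) (Q$1$3) (Q$3$3) \<noteq> 0"
  shows "\<exists>t. P' = t *\<^sub>R P \<and> Q' = t *\<^sub>R Q"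
proof -
  obtain t where "block_proportional t P Q P' Q' 1 3"
    using block_13_proportional[OF sym cross Q11 R13] ..
  moreover have "P$1$2 = 0" "Q$1$2 = 0" "P'$1$2 = 0" "Q'$1$2 = 0"
    using row2 symmetric_entry[OF sym(1)] symmetric_entry[OF sym(2)]
      symmetric_entry[OF sym(3)] symmetric_entry[OF sym(4)] by metis+
  ultimately show ?thesis
    using row2 symmetric_matrix_eq_scaleR[OF sym(1,3)] symmetric_matrix_eq_scaleR[OF sym(2,4)]
    by (auto simp: block_proportional_def)
qed

theorem lemma2:
  fixes P Q P' Q' :: "real^3^3" and pts :: "'n::finite \<Rightarrow> real \<times> real"
  assumes symP: "transpose P = P" and symQ: "transpose Q = Q"
    and symP': "transpose P' = P'" and symQ': "transpose Q' = Q'"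
    and rank: "rank (V_Omega pts) = 15"
    and denQ: "\<forall>i. qform Q (xbar (fst (pts i)) (snd (pts i))) \<noteq> 0"
    and denQ': "\<forall>i. qform Q' (xbar (fst (pts i)) (snd (pts i))) \<noteq> 0"
    and eq: "\<forall>i. qform P (xbar (fst (pts i)) (snd (pts i))) / qform Q (xbar (fst (pts i)) (snd (pts i)))
                = qform P' (xbar (fst (pts i)) (snd (pts i))) / qform Q' (xbar (fst (pts i)) (snd (pts i)))"
    and cases:
      "(Q$1$1 \<noteq> 0 \<and> Q$2$2 \<noteq> 0 \<and> Q$3$3 \<noteq> 0 \<and>
        4 * (P$1$1 * Q$1$2 - P$1$2 * Q$1$1) * (P$2$2 * Q$1$2 - P$1$2 * Q$2$2)
          + (P$1$1 * Q$2$2 - P$2$2 * Q$1$1)^2 \<noteq> 0 \<and>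
        4 * (P$1$1 * Q$1$3 - P$1$3 * Q$1$1) * (P$3$3 * Q$1$3 - P$1$3 * Q$3$3)
          + (P$1$1 * Q$3$3 - P$3$3 * Q$1$1)^2 \<noteq> 0 \<and>
        4 * (P$2$2 * Q$2$3 - P$2$3 * Q$2$2) * (P$3$3 * Q$2$3 - P$2$3 * Q$3$3)
          + (P$2$2 * Q$3$3 - P$3$3 * Q$2$2)^2 \<noteq> 0)
      \<or>
       ((\<forall>j\<in>{1,2,3::3}. P$j$2 = 0 \<and> P$2$j = 0 \<and> Q$j$2 = 0 \<and> Q$2$j = 0 \<and>
                      P'$j$2 = 0 \<and> P'$2$j = 0 \<and> Q'$j$2 = 0 \<and> Q'$2$j = 0) \<and>
        Q$1$1 \<noteq> 0 \<and> Q$3$3 \<noteq> 0 \<and>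
        4 * (P$1$1 * Q$1$3 - P$1$3 * Q$1$1) * (P$3$3 * Q$1$3 - P$1$3 * Q$3$3)
          + (P$1$1 * Q$3$3 - P$3$3 * Q$1$1)^2 \<noteq> 0)"
  shows "\<exists>t::real. t \<noteq> 0 \<and> P = t *\<^sub>R P' \<and> Q = t *\<^sub>R Q'"
proof -
  note sym = symP symQ symP' symQ'
  have cross: "\<forall>pq\<in>quartic_exps. cross_coeff P Q P' Q' pq = 0"
    using cross_coeff_eq_0[OF rank denQ denQ' eq] .
  obtain s where P': "P' = s *\<^sub>R P" and Q': "Q' = s *\<^sub>R Q"
    using cases proportional_if_three_blocks[OF sym cross] proportional_if_outer_block[OF sym cross]
    unfolding quadratic_form_resultant_def by (auto simp: forall_3)
  have "s \<noteq> 0"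
  proof
    assume "s = 0"
    then show False using denQ' by (simp add: Q' qform_def)
  qed
  then show ?thesis
    using P' Q' by (intro exI[of _ "1/s"]) simp
qed

end
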